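(* Let $\mathrm{dist}$ be a distance measure and let $\Pi$ be an SSP-NP-complete problem such that \textsc{3Sat} is blow-up SSP reducible to $\Pi$ with respect to $\mathrm{dist}$. Then every SSP problem $\Pi'$ to which there is a blow-up preserving SSP reduction from $\Pi$ is such that \textsc{3Sat} is blow-up SSP reducible to $\Pi'$ with respect to $\mathrm{dist}$.
   Context: An SSP problem is $\Pi = (\mathcal{I}, \mathcal{U}, \mathcal{S})$ with instances $\mathcal{I} \subseteq \{0,1\}^*$, and for each $I$ a universe $\mathcal{U}(I)$ and solution set $\mathcal{S}(I) \subseteq 2^{\mathcal{U}(I)}$; $I$ is a yes-instance iff $\mathcal{S}(I)\ne\emptyset$. \textsc{Satisfiability} as SSP problem: instance = literal set $L = \{\ell_1,\dots,\ell_n,\overline{\ell}_1,\dots,\overline{\ell}_n\}$ and clauses $C_j \subseteq L$; universe $L$; solutions are the $L' \subseteq L$ with $|L'\cap\{\ell_i,\overline{\ell}_i\}|=1$ for all $i$ and $|L'\cap C_j| \ge 1$ for all $j$. \textsc{3Sat}: the same with every clause having three literals. An SSP reduction from $(\mathcal{I},\mathcal{U},\mathcal{S})$ to $(\mathcal{I}',\mathcal{U}',\mathcal{S}')$: polynomial-time $g$ with $\mathcal{S}(I)\ne\emptyset \iff \mathcal{S}'(g(I))\ne\emptyset$ and polynomial-time injective $f_I : \mathcal{U}(I)\to\mathcal{U}'(g(I))$ with $\{f_I(S): S\in\mathcal{S}(I)\} = \{S'\cap f_I(\mathcal{U}(I)) : S'\in\mathcal{S}'(g(I))\}$. A problem is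 SSP-NP-complete if its solutions are verifiable in polynomial time and there is an SSP reduction from \textsc{Satisfiability} to it. A blow-up preserving SSP reduction from $\Pi$ to $\Pi'$ is an SSP reduction $(g, f_I)$ such that for every instance $I$ and every $u' \in \mathcal{U}'(g(I))$, either $u' \in f_I(\mathcal{U}(I))$, or $u'$ lies in no solution $S' \in \mathcal{S}'(g(I))$, or $u'$ lies in every solution $S' \in \mathcal{S}'(g(I))$. A distance measure assigns to each set $U$ a polynomial-time computable $\mathrm{dist}_U : 2^U\times 2^U\to\mathbb{R}_{\ge0}$, invariant under injective maps ($\mathrm{dist}_U(A_1,A_2)=\mathrm{dist}_{U'}(f(A_1),f(A_2))$), invariant under union ($\mathrm{dist}_U(A_1,A_2)=\mathrm{dist}_U(A_1\cup\{x\},A_2\cup\{x\})$ for $x\notin A_1\cup A_2$), with $\mathrm{dist}_U(A,A)=0$. \textsc{3Sat} is blow-up SSP reducible to $\Pi'=(\mathcal{I}',\mathcal{U}',\mathcal{S}')$ with respect to $\mathrm{dist}$ if for every \textsc{3Sat} instance $I$ with literals $L$ and every $L_b\subseteq L$ with $\ell_i\in L_b\iff\overline{\ell}_i\in L_b$ there is an SSP reduction $(g,f_I)$ and a polynomial-time computable $\beta_I\in\mathbb{N}$ such that for all $S_1,S_2\in\mathcal{S}'(g(I))$: $f_I(L_b)\cap S_1 = f_I(L_b)\cap S_2 \iff \mathrm{dist}(S_1,S_2)\le\beta_I$. *)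

theory Defs
  imports Complex_Main
begin

definition enc_pair :: "bool list \<Rightarrow> bool list \<Rightarrow> bool list" where
  "enc_pair x y = concat (map (\<lambda>b. [b, b]) x) @ [True, False] @ y"

fun dec_pair :: "bool list \<Rightarrow> bool list \<times> bool list" where
  "dec_pair (a # b # r) =
     (if a = b then (case dec_pair r of (x, y) \<Rightarrow> (a # x, y)) else ([], r))"
| "dec_pair _ = ([], [])"

fun enc_list :: "bool list list \<Rightarrow> bool list" where
  "enc_list [] = []"
| "enc_list (x # xs) = enc_pair x (enc_list xs)"

fun bin :: "nat \<Rightarrow> bool list" where
  "bin n = (if n = 0 then [] else odd n # bin (n div 2))"

text \<open>PT is the class of polynomial-time computable functions on bit strings.
  We only require the (true) closure properties of polynomial time: constants,
  identity, composition, pairing and projections.\<close>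

definition poly_model :: "((bool list \<Rightarrow> bool list) \<Rightarrow> bool) \<Rightarrow> bool" where
  "poly_model PT \<longleftrightarrow>
     PT id \<and> (\<forall>c. PT (\<lambda>_. c)) \<and>
     (\<forall>f g. PT f \<longrightarrow> PT g \<longrightarrow> PT (f \<circ> g)) \<and>
     (\<forall>f g. PT f \<longrightarrow> PT g \<longrightarrow> PT (\<lambda>s. enc_pair (f s) (g s))) \<and>
     PT (\<lambda>s. fst (dec_pair s)) \<and> PT (\<lambda>s. snd (dec_pair s))"

definition ptime2 :: "((bool list \<Rightarrow> bool list) \<Rightarrow> bool) \<Rightarrow>
    (bool list \<Rightarrow> bool list \<Rightarrow> bool list) \<Rightarrow> bool" where
  "ptime2 PT F \<longleftrightarrow> PT (\<lambda>s. F (fst (dec_pair s)) (snd (dec_pair s)))"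

record ssp =
  Inst :: "bool list set"
  Univ :: "bool list \<Rightarrow> bool list set"
  Sol  :: "bool list \<Rightarrow> bool list set set"

definition ssp_problem :: "ssp \<Rightarrow> bool" where
  "ssp_problem P \<longleftrightarrow>
     (\<forall>I \<in> Inst P. finite (Univ P I) \<and> Sol P I \<subseteq> Pow (Univ P I))"

definition ssp_reduction ::
  "((bool list \<Rightarrow> bool list) \<Rightarrow> bool) \<Rightarrow> ssp \<Rightarrow> ssp \<Rightarrow>
   (bool list \<Rightarrow> bool list) \<Rightarrow> (bool list \<Rightarrow> bool list \<Rightarrow> bool list) \<Rightarrow> bool" where
  "ssp_reduction PT P P' g f \<longleftrightarrow>
     PT g \<and> ptime2 PT f \<and>
     (\<forall>I \<in> Inst P.
        g I \<in> Inst P' \<and>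
        (Sol P I \<noteq> {} \<longleftrightarrow> Sol P' (g I) \<noteq> {}) \<and>
        inj_on (f I) (Univ P I) \<and> f I ` Univ P I \<subseteq> Univ P' (g I) \<and>
        {f I ` S | S. S \<in> Sol P I} = {S' \<inter> f I ` Univ P I | S'. S' \<in> Sol P' (g I)})"

definition blowup_preserving_reduction ::
  "((bool list \<Rightarrow> bool list) \<Rightarrow> bool) \<Rightarrow> ssp \<Rightarrow> ssp \<Rightarrow>
   (bool list \<Rightarrow> bool list) \<Rightarrow> (bool list \<Rightarrow> bool list \<Rightarrow> bool list) \<Rightarrow> bool" where
  "blowup_preserving_reduction PT P P' g f \<longleftrightarrow>
     ssp_reduction PT P P' g f \<and>
     (\<forall>I \<in> Inst P. \<forall>u \<in> Univ P' (g I).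
        u \<in> f I ` Univ P I \<or> (\<forall>S' \<in> Sol P' (g I). u \<notin> S') \<or> (\<forall>S' \<in> Sol P' (g I). u \<in> S'))"

definition verifiable :: "((bool list \<Rightarrow> bool list) \<Rightarrow> bool) \<Rightarrow> ssp \<Rightarrow> bool" where
  "verifiable PT P \<longleftrightarrow>
     (\<exists>v. PT v \<and> (\<forall>I \<in> Inst P. \<forall>xs. set xs \<subseteq> Univ P I \<longrightarrow>
        (v (enc_pair I (enc_list xs)) = [True] \<longleftrightarrow> set xs \<in> Sol P I)))"

text \<open>Variables are 1..n; literal (i,True) is l_i, literal (i,False) its negation.
  A formula is (n, cs) with cs a list of clauses, each a list of literals.\<close>

definition lit :: "nat \<Rightarrow> bool \<Rightarrow> bool list" where
  "lit i b = enc_pair (bin i) [b]"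

definition lits :: "nat \<Rightarrow> bool list set" where
  "lits n = {lit i b | i b. 1 \<le> i \<and> i \<le> n}"

definition clause_set :: "(nat \<times> bool) list \<Rightarrow> bool list set" where
  "clause_set c = (\<lambda>(i, b). lit i b) ` set c"

definition enc_cnf :: "nat \<Rightarrow> (nat \<times> bool) list list \<Rightarrow> bool list" where
  "enc_cnf n cs = enc_pair (bin n) (enc_list (map (\<lambda>c. enc_list (map (\<lambda>(i, b). lit i b) c)) cs))"

definition is_cnf :: "nat \<Rightarrow> (nat \<times> bool) list list \<Rightarrow> bool" where
  "is_cnf n cs \<longleftrightarrow> (\<forall>c \<in> set cs. \<forall>(i, b) \<in> set c. 1 \<le> i \<and> i \<le> n)"

definition is_3cnf :: "nat \<Rightarrow> (nat \<times> bool) list list \<Rightarrow> bool" where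
  "is_3cnf n cs \<longleftrightarrow> is_cnf n cs \<and> (\<forall>c \<in> set cs. length c = 3 \<and> distinct c)"

definition sat_problem :: "(nat \<Rightarrow> (nat \<times> bool) list list \<Rightarrow> bool) \<Rightarrow> ssp" where
  "sat_problem ok =
     \<lparr> Inst = {enc_cnf n cs | n cs. ok n cs},
       Univ = (\<lambda>I. \<Union> {lits n | n cs. I = enc_cnf n cs \<and> ok n cs}),
       Sol = (\<lambda>I. {L'. \<exists>n cs. I = enc_cnf n cs \<and> ok n cs \<and> L' \<subseteq> lits n \<and>
                    (\<forall>i. 1 \<le> i \<and> i \<le> n \<longrightarrow> card (L' \<inter> {lit i True, lit i False}) = 1) \<and>
                    (\<forall>c \<in> set cs. L' \<inter> clause_set c \<noteq> {})}) \<rparr>"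

definition Sat :: ssp where "Sat = sat_problem is_cnf"
definition Sat3 :: ssp where "Sat3 = sat_problem is_3cnf"

definition ssp_np_complete :: "((bool list \<Rightarrow> bool list) \<Rightarrow> bool) \<Rightarrow> ssp \<Rightarrow> bool" where
  "ssp_np_complete PT P \<longleftrightarrow>
     ssp_problem P \<and> verifiable PT P \<and> (\<exists>g f. ssp_reduction PT Sat P g f)"

definition distance_measure ::
  "(bool list set \<Rightarrow> bool list set \<Rightarrow> bool list set \<Rightarrow> real) \<Rightarrow> bool" where
  "distance_measure dm \<longleftrightarrow>
     (\<forall>U A1 A2. A1 \<subseteq> U \<longrightarrow> A2 \<subseteq> U \<longrightarrow> dm U A1 A2 \<ge> 0) \<and>
     (\<forall>U U' f A1 A2. inj_on f U \<longrightarrow> f ` U \<subseteq> U' \<longrightarrow> A1 \<subseteq> U \<longrightarrow> A2 \<subseteq> U \<longrightarrow>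
        dm U A1 A2 = dm U' (f ` A1) (f ` A2)) \<and>
     (\<forall>U A1 A2 x. A1 \<subseteq> U \<longrightarrow> A2 \<subseteq> U \<longrightarrow> x \<in> U \<longrightarrow> x \<notin> A1 \<union> A2 \<longrightarrow>
        dm U A1 A2 = dm U (insert x A1) (insert x A2)) \<and>
     (\<forall>U A. A \<subseteq> U \<longrightarrow> dm U A A = 0)"

definition blowup_reducible ::
  "((bool list \<Rightarrow> bool list) \<Rightarrow> bool) \<Rightarrow>
   (bool list set \<Rightarrow> bool list set \<Rightarrow> bool list set \<Rightarrow> real) \<Rightarrow> ssp \<Rightarrow> bool" where
  "blowup_reducible PT dm P' \<longleftrightarrow>
     (\<forall>I \<in> Inst Sat3. \<forall>Lb. Lb \<subseteq> Univ Sat3 I \<longrightarrow>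
        (\<forall>i. lit i True \<in> Lb \<longleftrightarrow> lit i False \<in> Lb) \<longrightarrow>
        (\<exists>g f \<beta>. ssp_reduction PT Sat3 P' g f \<and> PT (\<lambda>s. bin (\<beta> s)) \<and>
           (\<forall>S1 \<in> Sol P' (g I). \<forall>S2 \<in> Sol P' (g I).
              (f I ` Lb \<inter> S1 = f I ` Lb \<inter> S2 \<longleftrightarrow>
               dm (Univ P' (g I)) S1 S2 \<le> real (\<beta> I)))))"

end

theory Submission
  imports Defs
begin

text \<open>Compose the blow-up reduction from 3Sat to \<open>\<Pi>\<close> with the blow-up preserving
  reduction from \<open>\<Pi>\<close> to \<open>\<Pi>'\<close>. Every solution of the target instance splits into the
  image of a solution of the intermediate instance and a part \<open>C\<close> outside that image;
  by blow-up preservation \<open>C\<close> is the same for all solutions. Invariance of the distance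
  under adding common elements and under injective maps then gives
  \<open>dist(S\<^sub>1, S\<^sub>2) = dist(T\<^sub>1, T\<^sub>2)\<close> for the corresponding intermediate solutions, and
  injectivity transfers the comparison on \<open>L\<^sub>b\<close>, so the same bound \<open>\<beta>\<close> works.\<close>

lemma dec_enc_pair [simp]: "dec_pair (enc_pair x y) = (x, y)"
  by (induction x) (auto simp: enc_pair_def)

lemma ptime2_comp:
  assumes pm: "poly_model PT" and "PT g" "ptime2 PT f1" "ptime2 PT f2"
  shows "ptime2 PT (\<lambda>I x. f2 (g I) (f1 I x))"
proof -
  have comp: "\<And>f h. PT f \<Longrightarrow> PT h \<Longrightarrow> PT (f \<circ> h)"
    and pair: "\<And>f h. PT f \<Longrightarrow> PT h \<Longrightarrow> PT (\<lambda>s. enc_pair (f s) (h s))"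
    and fst_dec: "PT (\<lambda>s. fst (dec_pair s))"
    using pm unfolding poly_model_def by blast+
  let ?F1 = "\<lambda>s. f1 (fst (dec_pair s)) (snd (dec_pair s))"
  let ?F2 = "\<lambda>s. f2 (fst (dec_pair s)) (snd (dec_pair s))"
  have "PT (?F2 \<circ> (\<lambda>s. enc_pair ((g \<circ> (\<lambda>s. fst (dec_pair s))) s) (?F1 s)))"
    using assms by (intro comp pair fst_dec) (auto simp: ptime2_def)
  then show ?thesis
    unfolding ptime2_def by (simp add: comp_def)
qed

lemma ssp_reductionD:
  assumes "ssp_reduction PT P P' g f" and "I \<in> Inst P"
  shows "g I \<in> Inst P'" "Sol P I \<noteq> {} \<longleftrightarrow> Sol P' (g I) \<noteq> {}"
    "inj_on (f I) (Univ P I)" "f I ` Univ P I \<subseteq> Univ P' (g I)"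
    "image (f I) ` Sol P I = (\<lambda>S'. S' \<inter> f I ` Univ P I) ` Sol P' (g I)"
  using assms unfolding ssp_reduction_def Setcompr_eq_image by auto

lemma ssp_problem_Sol_subset:
  assumes "ssp_problem P" "I \<in> Inst P" "S \<in> Sol P I"
  shows "S \<subseteq> Univ P I"
  using assms unfolding ssp_problem_def by blast

lemma traces_comp:
  assumes inj2: "inj_on F2 U2" and sub1: "F1 ` U1 \<subseteq> U2"
    and sols2: "\<forall>T \<in> Sol2. T \<subseteq> U2"
    and tr1: "image F1 ` Sol1 = (\<lambda>T. T \<inter> F1 ` U1) ` Sol2"
    and tr2: "image F2 ` Sol2 = (\<lambda>S. S \<inter> F2 ` U2) ` Sol3"
  shows "image (F2 \<circ> F1) ` Sol1 = (\<lambda>S. S \<inter> (F2 \<circ> F1) ` U1) ` Sol3"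
proof -
  have "image (F2 \<circ> F1) ` Sol1 = image F2 ` image F1 ` Sol1"
    by (simp add: image_comp)
  also have "\<dots> = (\<lambda>T. F2 ` (T \<inter> F1 ` U1)) ` Sol2"
    by (simp add: tr1 image_comp comp_def)
  also have "\<dots> = (\<lambda>T. F2 ` T \<inter> F2 ` F1 ` U1) ` Sol2"
    using sols2 sub1 by (intro image_cong refl inj_on_image_Int[OF inj2]) auto
  also have "\<dots> = (\<lambda>X. X \<inter> F2 ` F1 ` U1) ` image F2 ` Sol2"
    by (simp add: image_comp comp_def)
  also have "\<dots> = (\<lambda>S. S \<inter> F2 ` U2 \<inter> F2 ` F1 ` U1) ` Sol3"
    by (simp add: tr2 image_comp comp_def)
  also have "\<dots> = (\<lambda>S. S \<inter> (F2 \<circ> F1) ` U1) ` Sol3"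
    using sub1 by (intro image_cong refl) (auto simp: image_comp)
  finally show ?thesis .
qed

lemma ssp_reduction_comp:
  assumes pm: "poly_model PT" and P: "ssp_problem P"
    and r1: "ssp_reduction PT Q P g1 f1" and r2: "ssp_reduction PT P P' g2 f2"
  shows "ssp_reduction PT Q P' (g2 \<circ> g1) (\<lambda>I x. f2 (g1 I) (f1 I x))"
  unfolding ssp_reduction_def
proof (intro conjI ballI)
  have "PT g1" "PT g2" "ptime2 PT f1" "ptime2 PT f2"
    using r1 r2 unfolding ssp_reduction_def by blast+
  then show "PT (g2 \<circ> g1)" "ptime2 PT (\<lambda>I x. f2 (g1 I) (f1 I x))"
    using pm ptime2_comp unfolding poly_model_def by blast+
next
  fix I assume I: "I \<in> Inst Q"
  note R1 = ssp_reductionD[OF r1 I]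
  note R2 = ssp_reductionD[OF r2 R1(1)]
  have F: "(\<lambda>x. f2 (g1 I) (f1 I x)) = f2 (g1 I) \<circ> f1 I" by (simp add: comp_def)
  show "(g2 \<circ> g1) I \<in> Inst P'" "Sol Q I \<noteq> {} \<longleftrightarrow> Sol P' ((g2 \<circ> g1) I) \<noteq> {}"
    using R1 R2 by simp_all
  show "inj_on (\<lambda>x. f2 (g1 I) (f1 I x)) (Univ Q I)"
    unfolding F using R1(3,4) R2(3) by (blast intro: comp_inj_on inj_on_subset)
  show "(\<lambda>x. f2 (g1 I) (f1 I x)) ` Univ Q I \<subseteq> Univ P' ((g2 \<circ> g1) I)"
    using R1(4) R2(4) by auto
  have "image (f2 (g1 I) \<circ> f1 I) ` Sol Q I
      = (\<lambda>S. S \<inter> (f2 (g1 I) \<circ> f1 I) ` Univ Q I) ` Sol P' ((g2 \<circ> g1) I)"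
    unfolding comp_apply[of g2 g1]
    using R1 R2 ssp_problem_Sol_subset[OF P R1(1)] by (intro traces_comp) auto
  then show "{(\<lambda>x. f2 (g1 I) (f1 I x)) ` S | S. S \<in> Sol Q I}
      = {S' \<inter> (\<lambda>x. f2 (g1 I) (f1 I x)) ` Univ Q I | S'. S' \<in> Sol P' ((g2 \<circ> g1) I)}"
    unfolding F Setcompr_eq_image .
qed

lemma blowup_preserving_reduction_imp_ssp_reduction:
  "blowup_preserving_reduction PT P P' g f \<Longrightarrow> ssp_reduction PT P P' g f"
  unfolding blowup_preserving_reduction_def by (elim conjE)

lemma distance_measure_image:
  assumes "distance_measure dm" "inj_on f U" "f ` U \<subseteq> U'" "A1 \<subseteq> U" "A2 \<subseteq> U"
  shows "dm U' (f ` A1) (f ` A2) = dm U A1 A2"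
proof -
  have "\<forall>U U' f A1 A2. inj_on f U \<longrightarrow> f ` U \<subseteq> U' \<longrightarrow> A1 \<subseteq> U \<longrightarrow> A2 \<subseteq> U \<longrightarrow>
      dm U A1 A2 = dm U' (f ` A1) (f ` A2)"
    using assms(1) unfolding distance_measure_def by (elim conjE)
  from this[rule_format, OF assms(2-5)] show ?thesis ..
qed

lemma distance_measure_insert:
  assumes "distance_measure dm" "A1 \<subseteq> U" "A2 \<subseteq> U" "x \<in> U" "x \<notin> A1 \<union> A2"
  shows "dm U (insert x A1) (insert x A2) = dm U A1 A2"
proof -
  have "\<forall>U A1 A2 x. A1 \<subseteq> U \<longrightarrow> A2 \<subseteq> U \<longrightarrow> x \<in> U \<longrightarrow> x \<notin> A1 \<union> A2 \<longrightarrow>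
      dm U A1 A2 = dm U (insert x A1) (insert x A2)"
    using assms(1) unfolding distance_measure_def by (elim conjE)
  from this[rule_format, OF assms(2-5)] show ?thesis ..
qed

lemma distance_measure_Un_common:
  assumes dm: "distance_measure dm"
  shows "finite C \<Longrightarrow> C \<subseteq> U \<Longrightarrow> A1 \<subseteq> U \<Longrightarrow> A2 \<subseteq> U \<Longrightarrow> C \<inter> (A1 \<union> A2) = {} \<Longrightarrow>
    dm U (A1 \<union> C) (A2 \<union> C) = dm U A1 A2"
proof (induction C rule: finite_induct)
  case empty
  then show ?case by simp
next
  case (insert x C)
  have "dm U (A1 \<union> insert x C) (A2 \<union> insert x C) = dm U (insert x (A1 \<union> C)) (insert x (A2 \<union> C))"
    by simp
  also have "\<dots> = dm U (A1 \<union> C) (A2 \<union> C)"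
    using insert.prems insert.hyps by (intro distance_measure_insert[OF dm]) auto
  also have "\<dots> = dm U A1 A2"
    using insert by auto
  finally show ?case .
qed

lemma blowup_preserving_Sol_decomp:
  assumes bp: "blowup_preserving_reduction PT P P' g f"
    and P': "ssp_problem P'" and I: "I \<in> Inst P"
  obtains C where "finite C" "C \<subseteq> Univ P' (g I)" "C \<inter> f I ` Univ P I = {}"
    "\<And>S'. S' \<in> Sol P' (g I) \<Longrightarrow> S' = (S' \<inter> f I ` Univ P I) \<union> C"
proof
  let ?U' = "Univ P' (g I)"
  define C where "C = {u \<in> ?U' - f I ` Univ P I. \<forall>S' \<in> Sol P' (g I). u \<in> S'}"
  have gI: "g I \<in> Inst P'"
    using ssp_reductionD(1)[OF blowup_preserving_reduction_imp_ssp_reduction[OF bp] I] .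
  then show "finite C"
    using P' unfolding C_def ssp_problem_def by auto
  show "C \<subseteq> ?U'" "C \<inter> f I ` Univ P I = {}"
    unfolding C_def by auto
  fix S' assume S': "S' \<in> Sol P' (g I)"
  have "S' \<subseteq> ?U'"
    using ssp_problem_Sol_subset[OF P' gI S'] .
  moreover have "\<forall>u \<in> ?U'. u \<in> f I ` Univ P I \<or> (\<forall>S' \<in> Sol P' (g I). u \<notin> S') \<or> (\<forall>S' \<in> Sol P' (g I). u \<in> S')"
    using bp I unfolding blowup_preserving_reduction_def by blast
  ultimately show "S' = (S' \<inter> f I ` Univ P I) \<union> C"
    using S' unfolding C_def by blast
qed

lemma blowup_preserving_separation:
  assumes dm: "distance_measure dm" and bp: "blowup_preserving_reduction PT P P' g f"
    and P: "ssp_problem P" and P': "ssp_problem P'"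
    and J: "J \<in> Inst P" and L: "L \<subseteq> Univ P J"
    and sep: "\<forall>T1 \<in> Sol P J. \<forall>T2 \<in> Sol P J. (L \<inter> T1 = L \<inter> T2 \<longleftrightarrow> dm (Univ P J) T1 T2 \<le> b)"
  shows "\<forall>S1 \<in> Sol P' (g J). \<forall>S2 \<in> Sol P' (g J).
    (f J ` L \<inter> S1 = f J ` L \<inter> S2 \<longleftrightarrow> dm (Univ P' (g J)) S1 S2 \<le> b)"
proof (intro ballI)
  note R = ssp_reductionD[OF blowup_preserving_reduction_imp_ssp_reduction[OF bp] J]
  obtain C where C: "finite C" "C \<subseteq> Univ P' (g J)" "C \<inter> f J ` Univ P J = {}"
    and decomp: "\<And>S'. S' \<in> Sol P' (g J) \<Longrightarrow> S' = (S' \<inter> f J ` Univ P J) \<union> C"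
    using blowup_preserving_Sol_decomp[OF bp P' J] by blast
  have trace: "\<exists>T \<in> Sol P J. S' = f J ` T \<union> C \<and> f J ` L \<inter> S' = f J ` (L \<inter> T)"
    if S': "S' \<in> Sol P' (g J)" for S'
  proof -
    obtain T where T: "T \<in> Sol P J" "f J ` T = S' \<inter> f J ` Univ P J"
      using R(5) S' by (metis (no_types, lifting) image_iff)
    have "f J ` L \<inter> S' = f J ` L \<inter> f J ` T"
      using L by (subst decomp[OF S']) (use C(3) T(2) in blast)
    also have "\<dots> = f J ` (L \<inter> T)"
      using L ssp_problem_Sol_subset[OF P J T(1)] by (intro inj_on_image_Int[OF R(3), symmetric])
    finally have "f J ` L \<inter> S' = f J ` (L \<inter> T)" .
    moreover have "S' = f J ` T \<union> C"
      using decomp[OF S'] T(2) by simp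
    ultimately show ?thesis
      using T(1) by blast
  qed
  fix S1 S2 assume "S1 \<in> Sol P' (g J)" "S2 \<in> Sol P' (g J)"
  then obtain T1 T2 where T: "T1 \<in> Sol P J" "T2 \<in> Sol P J"
    and S: "S1 = f J ` T1 \<union> C" "S2 = f J ` T2 \<union> C"
    and LS: "f J ` L \<inter> S1 = f J ` (L \<inter> T1)" "f J ` L \<inter> S2 = f J ` (L \<inter> T2)"
    using trace by meson
  have TU: "T1 \<subseteq> Univ P J" "T2 \<subseteq> Univ P J"
    using ssp_problem_Sol_subset[OF P J] T by auto
  have "dm (Univ P' (g J)) S1 S2 = dm (Univ P' (g J)) (f J ` T1) (f J ` T2)"
    unfolding S using C TU R(4) by (intro distance_measure_Un_common[OF dm]) blast+
  also have "\<dots> = dm (Univ P J) T1 T2"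
    using TU by (intro distance_measure_image[OF dm R(3,4)])
  finally have "dm (Univ P' (g J)) S1 S2 = dm (Univ P J) T1 T2" .
  moreover have "f J ` (L \<inter> T1) = f J ` (L \<inter> T2) \<longleftrightarrow> L \<inter> T1 = L \<inter> T2"
    using L by (intro inj_on_image_eq_iff[OF R(3)]) auto
  ultimately show "f J ` L \<inter> S1 = f J ` L \<inter> S2 \<longleftrightarrow> dm (Univ P' (g J)) S1 S2 \<le> b"
    using sep T LS by simp
qed

theorem theorem4:
  fixes PT :: "(bool list \<Rightarrow> bool list) \<Rightarrow> bool"
    and dm :: "bool list set \<Rightarrow> bool list set \<Rightarrow> bool list set \<Rightarrow> real"
    and P :: ssp
  assumes "poly_model PT"
    and "distance_measure dm"
    and "ssp_np_complete PT P"
    and "blowup_reducible PT dm P"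
  shows "\<forall>P'. ssp_problem P' \<longrightarrow>
           (\<exists>g f. blowup_preserving_reduction PT P P' g f) \<longrightarrow>
           blowup_reducible PT dm P'"
proof (intro allI impI)
  fix P' assume P': "ssp_problem P'" and "\<exists>g f. blowup_preserving_reduction PT P P' g f"
  then obtain g2 f2 where bp: "blowup_preserving_reduction PT P P' g2 f2" by blast
  have P: "ssp_problem P"
    using assms(3) unfolding ssp_np_complete_def by blast
  show "blowup_reducible PT dm P'"
    unfolding blowup_reducible_def
  proof (intro ballI allI impI)
    fix I Lb
    assume I: "I \<in> Inst Sat3" and Lb: "Lb \<subseteq> Univ Sat3 I"
      and Lb_sym: "\<forall>i. lit i True \<in> Lb \<longleftrightarrow> lit i False \<in> Lb"
    obtain g1 f1 \<beta> where r1: "ssp_reduction PT Sat3 P g1 f1" and \<beta>: "PT (\<lambda>s. bin (\<beta> s))"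
      and sep: "\<forall>T1 \<in> Sol P (g1 I). \<forall>T2 \<in> Sol P (g1 I).
        (f1 I ` Lb \<inter> T1 = f1 I ` Lb \<inter> T2 \<longleftrightarrow> dm (Univ P (g1 I)) T1 T2 \<le> real (\<beta> I))"
      using assms(4)[unfolded blowup_reducible_def, rule_format, OF I Lb Lb_sym[rule_format]]
      by (elim exE conjE)
    note R1 = ssp_reductionD[OF r1 I]
    have r: "ssp_reduction PT Sat3 P' (g2 \<circ> g1) (\<lambda>I x. f2 (g1 I) (f1 I x))"
      using bp by (intro ssp_reduction_comp[OF assms(1) P r1] blowup_preserving_reduction_imp_ssp_reduction)
    have "\<forall>S1 \<in> Sol P' ((g2 \<circ> g1) I). \<forall>S2 \<in> Sol P' ((g2 \<circ> g1) I).
      ((\<lambda>x. f2 (g1 I) (f1 I x)) ` Lb \<inter> S1 = (\<lambda>x. f2 (g1 I) (f1 I x)) ` Lb \<inter> S2 \<longleftrightarrow>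
       dm (Univ P' ((g2 \<circ> g1) I)) S1 S2 \<le> real (\<beta> I))"
      unfolding comp_apply image_image[symmetric]
      using Lb R1(4) by (intro blowup_preserving_separation[OF assms(2) bp P P' R1(1) _ sep]) blast
    then show "\<exists>g f \<beta>. ssp_reduction PT Sat3 P' g f \<and> PT (\<lambda>s. bin (\<beta> s)) \<and>
        (\<forall>S1 \<in> Sol P' (g I). \<forall>S2 \<in> Sol P' (g I).
          (f I ` Lb \<inter> S1 = f I ` Lb \<inter> S2 \<longleftrightarrow> dm (Univ P' (g I)) S1 S2 \<le> real (\<beta> I)))"
      using r \<beta> by blast
  qed
qed

end
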